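(* Let $\mathcal{R}$ be a von Neumann algebra, $A\in\mathcal{R}_{sa}$ with spectral family $(E^A_\lambda)_{\lambda\in\mathbb{R}}$, and let $\lambda\in f_A(\mathcal{D}(\mathcal{R}))$. Put $\mathcal{J}_\lambda:=\bigcap\{\mathcal{J}\in\mathcal{D}(\mathcal{R}) : f_A(\mathcal{J})=\lambda\}$. Then $$\mathcal{J}_\lambda=\{P\in\mathcal{P}(\mathcal{R}) : \exists\,\mu>\lambda : P\ge E^A_\mu\};$$ moreover $\mathcal{J}_\lambda=H_{E^A_\lambda}$ if and only if $E^A$ is constant on some interval $[\lambda,\lambda+\delta]$ with $\delta>0$; and $E^A_\lambda=\inf\mathcal{J}_\lambda$ (the infimum in $\mathcal{P}(\mathcal{R})$).
   Context: $\mathcal{P}(\mathcal{R})$ is the projection lattice of $\mathcal{R}$. A dual ideal of $\mathcal{P}(\mathcal{R})$ is a nonempty subset $\mathcal{J}$ with $0\notin\mathcal{J}$, $P,Q\in\mathcal{J}\Rightarrow P\wedge Q\in\mathcal{J}$, and $P\in\mathcal{J},P\le Q\Rightarrow Q\in\mathcal{J}$; $\mathcal{D}(\mathcal{R})$ is the set of dual ideals. For $P\neq0$, $H_P:=\{Q : Q\ge P\}$. The spectral family is right-continuous, and $f_A(\mathcal{J}):=\inf\{\lambda : E^A_\lambda\in\mathcal{J}\}$ for $\mathcal{J}\in\mathcal{D}(\mathcal{R})$. *)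

theory Defs
  imports Complex_Main
begin

text \<open>The projection lattice P(R) of the von Neumann algebra R is modelled by an
arbitrary complete lattice (type class complete_lattice): bot = 0, top = I,
inf = meet, Inf = infimum in P(R). The spectral family of A in R_sa is a map
E : real \<Rightarrow> P(R) that is increasing, right-continuous (E l is the infimum of
the E m, m > l) and, A being bounded, equal to 0 below some a and to I from some b on.\<close>

definition spectral_family :: "(real \<Rightarrow> 'a::complete_lattice) \<Rightarrow> bool" where
  "spectral_family E \<longleftrightarrow> mono E \<and> (\<forall>l. E l = Inf (E ` {l<..})) \<and>
     (\<exists>a b. a \<le> b \<and> (\<forall>l<a. E l = bot) \<and> (\<forall>l\<ge>b. E l = top))"

definition dual_ideal :: "'a::complete_lattice set \<Rightarrow> bool" where
  "dual_ideal J \<longleftrightarrow> J \<noteq> {} \<and> bot \<notin> J \<and> (\<forall>P\<in>J. \<forall>Q\<in>J. inf P Q \<in> J) \<and>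
     (\<forall>P\<in>J. \<forall>Q. P \<le> Q \<longrightarrow> Q \<in> J)"

definition dual_ideals :: "'a::complete_lattice set set" where
  "dual_ideals = {J. dual_ideal J}"

definition H :: "'a::complete_lattice \<Rightarrow> 'a set" where
  "H P = {Q. P \<le> Q}"

definition fA :: "(real \<Rightarrow> 'a::complete_lattice) \<Rightarrow> 'a set \<Rightarrow> real" where
  "fA E J = Inf {l. E l \<in> J}"

definition Jlam :: "(real \<Rightarrow> 'a::complete_lattice) \<Rightarrow> real \<Rightarrow> 'a set" where
  "Jlam E l = \<Inter> {J \<in> dual_ideals. fA E J = l}"

end

theory Submission
  imports Defs
begin

text \<open>A dual ideal J with f_A(J) \<le> l contains every E_m with m > l, hence the
upward closure of {E_m | m > l}. This tail ideal is itself a dual ideal, and the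
inclusion gives f_A(tail) \<ge> f_A(J) = l, so it is the least dual ideal with
f_A-value l, i.e. J_l. Its infimum is E_l by right continuity, and it is principal at
E_l exactly when E_l is already one of the E_m with m > l.\<close>

definition tail_ideal :: "(real \<Rightarrow> 'a::complete_lattice) \<Rightarrow> real \<Rightarrow> 'a set" where
  "tail_ideal E l = {P. \<exists>m>l. E m \<le> P}"

lemma spectral_family_mono: "spectral_family E \<Longrightarrow> mono E"
  unfolding spectral_family_def by blast

lemma dual_ideal_top: "dual_ideal J \<Longrightarrow> top \<in> J"
  unfolding dual_ideal_def by (metis all_not_in_conv top_greatest)

lemma spectral_preimage_nonempty:
  assumes "spectral_family E" and "dual_ideal J"
  shows "{x. E x \<in> J} \<noteq> {}"
proof -
  obtain b where "\<forall>l\<ge>b. E l = top"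
    using assms(1) unfolding spectral_family_def by blast
  then show ?thesis using dual_ideal_top[OF assms(2)] by (metis empty_Collect_eq order_refl)
qed

lemma bdd_below_spectral_preimage:
  assumes "spectral_family E" and "dual_ideal J"
  shows "bdd_below {x. E x \<in> J}"
proof -
  obtain a where "\<forall>l<a. E l = bot"
    using assms(1) unfolding spectral_family_def by blast
  then have "a \<le> x" if "E x \<in> J" for x
    using that assms(2) unfolding dual_ideal_def by (metis not_le)
  then show ?thesis by (rule_tac bdd_belowI[of _ a]) simp
qed

lemma fA_le:
  assumes "spectral_family E" and "dual_ideal J" and "E x \<in> J"
  shows "fA E J \<le> x"
  unfolding fA_def
  using cInf_lower[OF _ bdd_below_spectral_preimage[OF assms(1,2)]] assms(3) by simp

lemma spectral_in_dual_ideal: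
  assumes "spectral_family E" and J: "dual_ideal J" and "fA E J < m"
  shows "E m \<in> J"
proof -
  obtain x where x: "E x \<in> J" "x < m"
    using assms cInf_less_iff[OF spectral_preimage_nonempty bdd_below_spectral_preimage]
    unfolding fA_def by blast
  have "E x \<le> E m" using spectral_family_mono[OF assms(1)] x(2) by (simp add: monoD)
  then show ?thesis using x(1) J unfolding dual_ideal_def by blast
qed

lemma fA_antimono:
  assumes "spectral_family E" and "dual_ideal J" and "dual_ideal K" and "K \<subseteq> J"
  shows "fA E J \<le> fA E K"
  unfolding fA_def
proof (rule cInf_superset_mono)
  show "{x. E x \<in> K} \<noteq> {}" using assms spectral_preimage_nonempty by blast
  show "bdd_below {x. E x \<in> J}" using assms(1,2) by (rule bdd_below_spectral_preimage)
  show "{x. E x \<in> K} \<subseteq> {x. E x \<in> J}" using assms(4) by blast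
qed

lemma tail_ideal_subset:
  assumes "spectral_family E" and "dual_ideal J" and "fA E J \<le> l"
  shows "tail_ideal E l \<subseteq> J"
proof
  fix P assume "P \<in> tail_ideal E l"
  then obtain m where "m > l" "E m \<le> P" unfolding tail_ideal_def by blast
  moreover have "E m \<in> J" using assms \<open>m > l\<close> by (intro spectral_in_dual_ideal) auto
  ultimately show "P \<in> J" using assms(2) unfolding dual_ideal_def by blast
qed

lemma dual_ideal_tail_ideal:
  assumes "mono E" and "\<forall>m>l. E m \<noteq> bot"
  shows "dual_ideal (tail_ideal E l)"
  unfolding dual_ideal_def
proof (intro conjI ballI allI impI)
  show "tail_ideal E l \<noteq> {}"
    unfolding tail_ideal_def by (metis empty_iff gt_ex mem_Collect_eq top_greatest)
  show "bot \<notin> tail_ideal E l"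
    using assms(2) unfolding tail_ideal_def by (auto simp: bot_unique)
  fix P Q assume "P \<in> tail_ideal E l"
  then obtain m where m: "m > l" "E m \<le> P" unfolding tail_ideal_def by blast
  show "Q \<in> tail_ideal E l" if "P \<le> Q"
    using m that order_trans unfolding tail_ideal_def by blast
  show "inf P Q \<in> tail_ideal E l" if "Q \<in> tail_ideal E l"
  proof -
    from that obtain n where n: "n > l" "E n \<le> Q" unfolding tail_ideal_def by blast
    have "E (min m n) \<le> E m" "E (min m n) \<le> E n" using assms(1) by (simp_all add: monoD)
    then have "E (min m n) \<le> inf P Q" using m n by (meson le_inf_iff order_trans)
    then show ?thesis unfolding tail_ideal_def using m n by (auto intro!: exI[of _ "min m n"])
  qed
qed

lemma fA_tail_ideal:
  assumes sf: "spectral_family E" and J: "dual_ideal J" and "fA E J = l"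
  shows "dual_ideal (tail_ideal E l)" and "fA E (tail_ideal E l) = l"
proof -
  have "mono E" using sf by (rule spectral_family_mono)
  moreover have "\<forall>m>l. E m \<noteq> bot"
    using spectral_in_dual_ideal[OF sf J] assms(3) J unfolding dual_ideal_def by metis
  ultimately show K: "dual_ideal (tail_ideal E l)" by (rule dual_ideal_tail_ideal)
  have "fA E (tail_ideal E l) \<le> m" if "m > l" for m
    using that by (intro fA_le[OF sf K]) (auto simp: tail_ideal_def)
  then have "fA E (tail_ideal E l) \<le> l" by (meson dense not_le)
  moreover have "l \<le> fA E (tail_ideal E l)"
    using fA_antimono[OF sf J K tail_ideal_subset[OF sf J]] assms(3) by simp
  ultimately show "fA E (tail_ideal E l) = l" by simp
qed

lemma Jlam_eq_tail_ideal:
  assumes "spectral_family E" and "l \<in> fA E ` dual_ideals"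
  shows "Jlam E l = tail_ideal E l"
proof -
  obtain J where J: "dual_ideal J" "fA E J = l"
    using assms(2) unfolding dual_ideals_def by blast
  have "tail_ideal E l \<in> {J \<in> dual_ideals. fA E J = l}"
    using fA_tail_ideal[OF assms(1) J] unfolding dual_ideals_def by blast
  moreover have "tail_ideal E l \<subseteq> J'" if "J' \<in> {J \<in> dual_ideals. fA E J = l}" for J'
    using that tail_ideal_subset[OF assms(1)] unfolding dual_ideals_def by simp
  ultimately show ?thesis unfolding Jlam_def by blast
qed

lemma le_tail_ideal:
  assumes "mono E" and "P \<in> tail_ideal E l"
  shows "E l \<le> P"
proof -
  obtain m where "m > l" "E m \<le> P" using assms(2) unfolding tail_ideal_def by blast
  moreover have "E l \<le> E m" using assms(1) \<open>m > l\<close> by (simp add: monoD)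
  ultimately show ?thesis by simp
qed

lemma Inf_tail_ideal:
  assumes "spectral_family E"
  shows "Inf (tail_ideal E l) = E l"
proof (rule order_antisym)
  show "E l \<le> Inf (tail_ideal E l)"
    using spectral_family_mono[OF assms] by (blast intro: Inf_greatest le_tail_ideal)
  have rc: "E l = Inf (E ` {l<..})" using assms unfolding spectral_family_def by blast
  have "E ` {l<..} \<subseteq> tail_ideal E l" unfolding tail_ideal_def by auto
  then show "Inf (tail_ideal E l) \<le> E l" unfolding rc by (rule Inf_superset_mono)
qed

lemma tail_ideal_eq_H_iff:
  assumes "mono E"
  shows "tail_ideal E l = H (E l) \<longleftrightarrow> (\<exists>d>0. \<forall>m\<in>{l..l+d}. E m = E l)"
proof
  assume "tail_ideal E l = H (E l)"
  then have "E l \<in> tail_ideal E l" unfolding H_def by blast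
  then obtain m where m: "m > l" "E m \<le> E l" unfolding tail_ideal_def by blast
  have "\<forall>x\<in>{l..l+(m-l)}. E x = E l"
  proof
    fix x assume "x \<in> {l..l+(m-l)}"
    then have "l \<le> x" "x \<le> m" by simp_all
    then have "E l \<le> E x" "E x \<le> E m" using assms by (simp_all add: monoD)
    then show "E x = E l" using m(2) by (metis order_antisym order_trans)
  qed
  moreover have "m - l > 0" using m(1) by simp
  ultimately show "\<exists>d>0. \<forall>x\<in>{l..l+d}. E x = E l" by blast
next
  assume "\<exists>d>0. \<forall>m\<in>{l..l+d}. E m = E l"
  then obtain d where "d > 0" and const: "\<forall>m\<in>{l..l+d}. E m = E l" by blast
  have "l + d > l" and "E (l + d) = E l"
    using \<open>d > 0\<close> const[rule_format, of "l + d"] by simp_all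
  then have "H (E l) \<subseteq> tail_ideal E l"
    unfolding H_def tail_ideal_def by (auto intro!: exI[of _ "l + d"])
  moreover have "tail_ideal E l \<subseteq> H (E l)"
    using le_tail_ideal[OF assms] unfolding H_def by blast
  ultimately show "tail_ideal E l = H (E l)" by blast
qed

theorem lemma2p16:
  fixes E :: "real \<Rightarrow> 'a::complete_lattice" and l :: real
  assumes "spectral_family E"
    and "l \<in> fA E ` dual_ideals"
  shows "Jlam E l = {P. \<exists>m>l. E m \<le> P}
    \<and> (Jlam E l = H (E l) \<longleftrightarrow> (\<exists>d>0. \<forall>m\<in>{l..l+d}. E m = E l))
    \<and> E l = Inf (Jlam E l)"
proof -
  have J: "Jlam E l = tail_ideal E l" using assms by (rule Jlam_eq_tail_ideal)
  show ?thesis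
    unfolding J
    using tail_ideal_eq_H_iff[OF spectral_family_mono[OF assms(1)]] Inf_tail_ideal[OF assms(1)]
    by (simp add: tail_ideal_def)
qed

end
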